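(* Let $E$ be a closed subset of $\mathbb{R}^n$ and let $k \ge 1$ be such that every two points $x, y \in E$ can be connected by a rectifiable path contained in $E$ whose length is at most $k\,|x-y|$. Let $A : \mathbb{R}^n \to \mathbb{R}$ be a fixed linear mapping and let $f : E \to \mathbb{R}$ be locally Lipschitz. Suppose that for every interval $I \subseteq \mathbb{R}$ and every locally Lipschitz map $p : I \to E$, the derivative of $t \mapsto f(p(t))$ equals $A(p'(t))$ for almost every $t \in I$. Then $f$ is the restriction to $E$ of an affine function on $\mathbb{R}^n$.
   Context: $|\cdot|$ denotes the Euclidean norm on $\mathbb{R}^n$. *)

theory Defs
  imports "HOL-Analysis.Analysis"
begin

definition variation_sums :: "(real \<Rightarrow> 'a::real_normed_vector) \<Rightarrow> real set" where
  "variation_sums g = {(\<Sum>i<m. norm (g (t (Suc i)) - g (t i))) | t m.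
      t 0 = 0 \<and> t m = 1 \<and> (\<forall>i<m. t i \<le> t (Suc i))}"

definition rectifiable_path :: "(real \<Rightarrow> 'a::real_normed_vector) \<Rightarrow> bool" where
  "rectifiable_path g \<longleftrightarrow> path g \<and> bdd_above (variation_sums g)"

definition path_length :: "(real \<Rightarrow> 'a::real_normed_vector) \<Rightarrow> real" where
  "path_length g = Sup (variation_sums g)"

definition locally_lipschitz_on :: "'a::metric_space set \<Rightarrow> ('a \<Rightarrow> 'b::metric_space) \<Rightarrow> bool" where
  "locally_lipschitz_on S f \<longleftrightarrow>
     (\<forall>x\<in>S. \<exists>U L. open U \<and> x \<in> U \<and> L-lipschitz_on (U \<inter> S) f)"

end

theory Submission
  imports Defs
begin

text \<open>Along a Lipschitz path \<open>p\<close> in \<open>E\<close> the function \<open>f \<circ> p - A \<circ> p\<close> is locally Lipschitz with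
  derivative zero almost everywhere. The image of the points with zero derivative is negligible
  (Sard), and so is the image of the remaining null set (Lipschitz maps preserve null sets); a
  continuous function on an interval with negligible image is constant. Reparametrizing by arc
  length turns every rectifiable path into a Lipschitz one, so \<open>f - A\<close> is constant on \<open>E\<close>.\<close>

subsection \<open>Locally Lipschitz functions\<close>

lemma lipschitz_on_imp_locally_lipschitz_on:
  "L-lipschitz_on S f \<Longrightarrow> locally_lipschitz_on S f"
  unfolding locally_lipschitz_on_def by (metis inf_top_left open_UNIV UNIV_I)

lemma bounded_linear_imp_locally_lipschitz_on:
  "bounded_linear A \<Longrightarrow> locally_lipschitz_on S A"
  by (metis bounded_linear.lipschitz_boundE lipschitz_on_imp_locally_lipschitz_on)

lemma locally_lipschitz_on_imp_continuous_on:
  assumes "locally_lipschitz_on S f"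
  shows "continuous_on S f"
  unfolding continuous_on_eq_continuous_within
proof
  fix x assume "x \<in> S"
  then obtain U L where U: "open U" "x \<in> U" "L-lipschitz_on (U \<inter> S) f"
    using assms unfolding locally_lipschitz_on_def by blast
  have "continuous (at x within U \<inter> S) f"
    using U(2,3) \<open>x \<in> S\<close> by (intro lipschitz_on_continuous_within) auto
  moreover have "at x within S = at x within U \<inter> S"
    by (rule at_within_nhd[OF U(2,1)]) auto
  ultimately show "continuous (at x within S) f"
    by (simp add: continuous_within)
qed

lemma locally_lipschitz_on_compose:
  assumes f: "locally_lipschitz_on T f" and p: "locally_lipschitz_on S p" and "p ` S \<subseteq> T"
  shows "locally_lipschitz_on S (\<lambda>x. f (p x))"
  unfolding locally_lipschitz_on_def
proof
  fix x assume "x \<in> S"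
  obtain U L where U: "open U" "x \<in> U" "L-lipschitz_on (U \<inter> S) p"
    using p \<open>x \<in> S\<close> unfolding locally_lipschitz_on_def by blast
  obtain V M where V: "open V" "p x \<in> V" "M-lipschitz_on (V \<inter> T) f"
    using f \<open>x \<in> S\<close> \<open>p ` S \<subseteq> T\<close> unfolding locally_lipschitz_on_def by blast
  obtain r where "r > 0" "ball (p x) r \<subseteq> V"
    using V(1,2) openE by blast
  moreover obtain d where "d > 0" "\<forall>y\<in>S. dist y x < d \<longrightarrow> dist (p y) (p x) < r"
    using locally_lipschitz_on_imp_continuous_on[OF p] \<open>x \<in> S\<close> \<open>r > 0\<close>
    unfolding continuous_on_iff by blast
  ultimately have "p ` ((U \<inter> ball x d) \<inter> S) \<subseteq> V \<inter> T"
    using \<open>p ` S \<subseteq> T\<close> by (auto simp: dist_commute)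
  then have "(M * L)-lipschitz_on ((U \<inter> ball x d) \<inter> S) (\<lambda>y. f (p y))"
    using U(3) V(3) by (intro lipschitz_on_compose2) (auto intro: lipschitz_on_subset)
  then show "\<exists>W K. open W \<and> x \<in> W \<and> K-lipschitz_on (W \<inter> S) (\<lambda>y. f (p y))"
    using U(1,2) \<open>d > 0\<close> by (intro exI[of _ "U \<inter> ball x d"] exI[of _ "M * L"]) auto
qed

lemma locally_lipschitz_on_diff:
  fixes f g :: "'a::metric_space \<Rightarrow> 'b::real_normed_vector"
  assumes f: "locally_lipschitz_on S f" and g: "locally_lipschitz_on S g"
  shows "locally_lipschitz_on S (\<lambda>x. f x - g x)"
  unfolding locally_lipschitz_on_def
proof
  fix x assume "x \<in> S"
  obtain U L where U: "open U" "x \<in> U" "L-lipschitz_on (U \<inter> S) f"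
    using f \<open>x \<in> S\<close> unfolding locally_lipschitz_on_def by blast
  obtain V M where V: "open V" "x \<in> V" "M-lipschitz_on (V \<inter> S) g"
    using g \<open>x \<in> S\<close> unfolding locally_lipschitz_on_def by blast
  have "(L + M)-lipschitz_on ((U \<inter> V) \<inter> S) (\<lambda>y. f y - g y)"
    using U(3) V(3) by (intro lipschitz_on_diff) (auto intro: lipschitz_on_subset)
  then show "\<exists>W K. open W \<and> x \<in> W \<and> K-lipschitz_on (W \<inter> S) (\<lambda>y. f y - g y)"
    using U(1,2) V(1,2) by blast
qed

subsection \<open>Functions of one real variable with derivative zero almost everywhere\<close>

lemma negligible_image_zero_derivative:
  fixes F :: "real \<Rightarrow> real"
  assumes der: "\<And>t. t \<in> Z \<Longrightarrow> (F has_real_derivative 0) (at t within Z)"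
  shows "negligible (F ` Z)"
proof -
  txt \<open>\<open>baby_Sard\<close> is stated for maps between spaces \<open>real^'m\<close>, so transport \<open>F\<close> along \<open>vec\<close>.\<close>
  let ?G = "\<lambda>x::real^1. vec (F (x $ 1)) :: real^1"
  have "(?G has_derivative (\<lambda>_. 0)) (at x within vec ` Z)" if "x \<in> vec ` Z" for x
  proof -
    obtain t where t: "t \<in> Z" "x = vec t"
      using \<open>x \<in> vec ` Z\<close> by blast
    have "(\<lambda>x::real. x * 0) = (*) 0"
      by (simp add: fun_eq_iff)
    then have "(F has_derivative (\<lambda>x. x * 0)) (at t within Z)"
      using der[OF t(1)] by (simp only: has_field_derivative_def)
    moreover have "(*\<^sub>R) (0::real) = (\<lambda>_::real^1. 0::real^1)"
      by (simp add: fun_eq_iff)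
    ultimately show ?thesis
      using has_derivative_vector_1[of F "\<lambda>_. 0"] t by simp
  qed
  moreover have "matrix (\<lambda>_::real^1. 0::real^1) = 0"
    by (simp add: matrix_def vec_eq_iff)
  ultimately have "negligible (?G ` vec ` Z)"
    by (intro baby_Sard[where f' = "\<lambda>_ _. 0"]) auto
  then have "negligible (vec ` F ` Z :: (real^1) set)"
    by (simp add: image_image)
  then have "negligible ((\<lambda>v::real^1. v $ 1) ` vec ` F ` Z)"
    by (rule negligible_differentiable_image_negligible[rotated])
       (auto intro: bounded_linear_imp_differentiable_on)
  then show ?thesis
    by (simp add: image_image)
qed

lemma continuous_on_negligible_image_const:
  fixes F :: "real \<Rightarrow> real"
  assumes "a \<le> b" "continuous_on {a..b} F" "negligible (F ` {a..b})"
  shows "F b = F a"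
proof -
  have "is_interval (F ` {a..b})"
    using assms(2) by (simp add: is_interval_connected_1 connected_continuous_image)
  then have "closed_segment (F a) (F b) \<subseteq> F ` {a..b}"
    using assms(1) by (intro convex_contains_segment[THEN iffD1, rule_format])
                      (auto simp: is_interval_convex_1)
  then have "negligible (closed_segment (F a) (F b))"
    using assms(3) negligible_subset by blast
  then have "open_segment (F a) (F b) = {}"
    by (simp add: negligible_convex_interior interior_closed_segment)
  then show ?thesis
    by simp
qed

lemma locally_lipschitz_on_ae_zero_derivative_const:
  fixes F :: "real \<Rightarrow> real"
  assumes "a \<le> b" and lip: "locally_lipschitz_on {a..b} F"
    and "AE t in lborel. t \<in> {a..b} \<longrightarrow> (F has_real_derivative 0) (at t within {a..b})"
  shows "F b = F a"
proof -
  from assms(3) obtain N where N: "N \<in> null_sets lborel"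
    and "{t \<in> space lborel. \<not> (t \<in> {a..b} \<longrightarrow> (F has_real_derivative 0) (at t within {a..b}))} \<subseteq> N"
    by (rule AE_E) blast
  then have der: "\<And>t. t \<in> {a..b} - N \<Longrightarrow> (F has_real_derivative 0) (at t within {a..b})"
    by auto
  have "negligible (F ` ({a..b} - N))"
    by (rule negligible_image_zero_derivative) (metis Diff_subset der has_field_derivative_subset)
  moreover have "negligible (F ` ({a..b} \<inter> N))"
  proof (rule negligible_locally_Lipschitz_image)
    show "negligible ({a..b} \<inter> N)"
      using N by (metis negligible_iff_null_sets null_sets_completionI negligible_subset Int_lower2)
    fix t assume "t \<in> {a..b} \<inter> N"
    then obtain U L where "open U" "t \<in> U" "L-lipschitz_on (U \<inter> {a..b}) F"
      using lip unfolding locally_lipschitz_on_def by blast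
    then show "\<exists>T B. open T \<and> t \<in> T \<and> (\<forall>s\<in>{a..b} \<inter> N \<inter> T. norm (F s - F t) \<le> B * norm (s - t))"
      using \<open>t \<in> {a..b} \<inter> N\<close> by (intro exI[of _ U] exI[of _ L]) (auto simp: lipschitz_on_def dist_norm)
  qed simp
  ultimately have "negligible (F ` {a..b})"
    by (metis Int_Diff_Un image_Un negligible_Un)
  then show ?thesis
    using assms(1) lip by (intro continuous_on_negligible_image_const locally_lipschitz_on_imp_continuous_on)
qed

lemma diff_linear_constant_along_lipschitz_path:
  fixes h :: "real \<Rightarrow> 'a::real_normed_vector" and f A :: "'a \<Rightarrow> real"
  assumes "bounded_linear A" "locally_lipschitz_on E f" "L-lipschitz_on {0..1} h" "h ` {0..1} \<subseteq> E"
    and "AE t in lborel. t \<in> {0..1} \<longrightarrow>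
           (\<exists>v. (h has_vector_derivative v) (at t within {0..1}) \<and>
                ((\<lambda>s. f (h s)) has_real_derivative A v) (at t within {0..1}))"
  shows "f (h 1) - A (h 1) = f (h 0) - A (h 0)"
proof (rule locally_lipschitz_on_ae_zero_derivative_const[where F = "\<lambda>s. f (h s) - A (h s)"])
  have h: "locally_lipschitz_on {0..1} h"
    using assms(3) by (rule lipschitz_on_imp_locally_lipschitz_on)
  have "locally_lipschitz_on {0..1} (\<lambda>s. f (h s))"
    using assms(2) h assms(4) by (rule locally_lipschitz_on_compose)
  moreover have "locally_lipschitz_on {0..1} (\<lambda>s. A (h s))"
    using bounded_linear_imp_locally_lipschitz_on[OF assms(1)] h subset_UNIV
    by (rule locally_lipschitz_on_compose)
  ultimately show "locally_lipschitz_on {0..1} (\<lambda>s. f (h s) - A (h s))"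
    by (rule locally_lipschitz_on_diff)
  have deriv: "((\<lambda>s. f (h s) - A (h s)) has_real_derivative 0) (at t within {0..1})"
    if "(h has_vector_derivative v) (at t within {0..1})"
      "((\<lambda>s. f (h s)) has_real_derivative A v) (at t within {0..1})" for t v
  proof -
    have "((\<lambda>s. A (h s)) has_real_derivative A v) (at t within {0..1})"
      using bounded_linear.has_vector_derivative[OF assms(1) that(1)]
      by (simp add: has_real_derivative_iff_has_vector_derivative)
    from DERIV_diff[OF that(2) this] show ?thesis
      by simp
  qed
  show "AE t in lborel. t \<in> {0..1} \<longrightarrow>
      ((\<lambda>s. f (h s) - A (h s)) has_real_derivative 0) (at t within {0..1})"
    using assms(5) by eventually_elim (use deriv in blast)
qed simp

subsection \<open>Lipschitz reparametrization of rectifiable paths\<close>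

lemma norm_diff_le_from_interior:
  fixes g :: "real \<Rightarrow> 'a::real_normed_vector"
  assumes cont: "continuous_on {a..b} g" and "a < b"
    and bd: "\<And>s s'. a < s' \<Longrightarrow> s' \<le> s \<Longrightarrow> s < b \<Longrightarrow> norm (g s - g s') \<le> c"
  shows "norm (g b - g a) \<le> c"
proof -
  have right: "norm (g b - g s') \<le> c" if "a < s'" "s' < b" for s'
  proof (rule continuous_on_closure_norm_le[of "{s'..<b}" "\<lambda>s. g s - g s'"])
    show "continuous_on (closure {s'..<b}) (\<lambda>s. g s - g s')"
      using that by (auto intro!: continuous_intros continuous_on_subset[OF cont])
  qed (use bd that in auto)
  show ?thesis
  proof (rule continuous_on_closure_norm_le[of "{a<..<b}" "\<lambda>s. g b - g s"])
    show "continuous_on (closure {a<..<b}) (\<lambda>s. g b - g s)"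
      using \<open>a < b\<close> by (auto intro!: continuous_intros continuous_on_subset[OF cont])
  qed (use right \<open>a < b\<close> in auto)
qed

text \<open>Only meaningful for \<open>c \<le> \<phi> 1\<close>; otherwise the set is empty and \<open>Inf {}\<close> is unspecified.\<close>

definition first_reach :: "(real \<Rightarrow> real) \<Rightarrow> real \<Rightarrow> real" where
  "first_reach \<phi> c = Inf {t \<in> {0..1}. c \<le> \<phi> t}"

lemma bdd_below_reach_set: "bdd_below {t \<in> {0..1::real}. c \<le> \<phi> t}"
  by (auto simp: bdd_below_def)

lemma first_reach_in_unit:
  assumes "c \<le> \<phi> 1"
  shows "first_reach \<phi> c \<in> {0..1}"
proof -
  have "1 \<in> {t \<in> {0..1}. c \<le> \<phi> t}"
    using assms by simp
  then have "0 \<le> first_reach \<phi> c \<and> first_reach \<phi> c \<le> 1"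
    unfolding first_reach_def by (auto intro: cInf_lower cInf_greatest bdd_below_reach_set)
  then show ?thesis
    by simp
qed

lemma less_first_reach_imp_less:
  assumes "c \<le> \<phi> 1" "0 \<le> s" "s < first_reach \<phi> c"
  shows "\<phi> s < c"
proof (rule ccontr)
  assume "\<not> \<phi> s < c"
  then have "first_reach \<phi> c \<le> s"
    using assms first_reach_in_unit[of c \<phi>] unfolding first_reach_def
    by (intro cInf_lower bdd_below_reach_set) auto
  then show False
    using assms(3) by simp
qed

lemma first_reach_less_imp_ge:
  assumes "mono_on {0..1} \<phi>" "c \<le> \<phi> 1" "first_reach \<phi> c < s" "s \<le> 1"
  shows "c \<le> \<phi> s"
proof -
  have "{t \<in> {0..1}. c \<le> \<phi> t} \<noteq> {}"
    using assms(2) by auto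
  then have "\<exists>t \<in> {t \<in> {0..1}. c \<le> \<phi> t}. t < s"
    using assms(3) unfolding first_reach_def by (rule cInf_lessD)
  then obtain t where "t \<in> {0..1}" "c \<le> \<phi> t" "t < s"
    by auto
  then show ?thesis
    using mono_onD[OF assms(1), of t s] assms(4) by auto
qed

lemma first_reach_mono:
  assumes "c \<le> c'" "c' \<le> \<phi> 1"
  shows "first_reach \<phi> c \<le> first_reach \<phi> c'"
  unfolding first_reach_def
  using assms by (intro cInf_superset_mono bdd_below_reach_set) auto

lemma first_reach_eq_0:
  assumes "mono_on {0..1} \<phi>" "c \<le> \<phi> 0"
  shows "first_reach \<phi> c = 0"
proof -
  have "c \<le> \<phi> t" if "t \<in> {0..1}" for t
    using assms(2) mono_onD[OF assms(1), of 0 t] that by simp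
  then have "{t \<in> {0..1}. c \<le> \<phi> t} = {0..1}"
    by auto
  then show ?thesis
    by (simp add: first_reach_def)
qed

lemma mono_on_of_dominated_increments:
  fixes g :: "real \<Rightarrow> 'a::real_normed_vector"
  assumes dom: "\<And>s t. 0 \<le> s \<Longrightarrow> s \<le> t \<Longrightarrow> t \<le> 1 \<Longrightarrow> \<phi> s + norm (g t - g s) \<le> \<phi> t"
  shows "mono_on {0..1} \<phi>"
proof (rule mono_onI)
  fix s t :: real assume "s \<in> {0..1}" "t \<in> {0..1}" "s \<le> t"
  then have "\<phi> s + norm (g t - g s) \<le> \<phi> t"
    by (intro dom) auto
  then show "\<phi> s \<le> \<phi> t"
    using norm_ge_zero[of "g t - g s"] by linarith
qed

lemma norm_diff_from_first_reach_le:
  fixes g :: "real \<Rightarrow> 'a::real_normed_vector"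
  assumes cont: "continuous_on {0..1} g"
    and dom: "\<And>s t. 0 \<le> s \<Longrightarrow> s \<le> t \<Longrightarrow> t \<le> 1 \<Longrightarrow> \<phi> s + norm (g t - g s) \<le> \<phi> t"
    and "c \<le> c'" "c' \<le> \<phi> 1" "first_reach \<phi> c \<le> b" "b \<le> 1"
    and below: "\<And>s. first_reach \<phi> c < s \<Longrightarrow> s < b \<Longrightarrow> \<phi> s \<le> c'"
  shows "norm (g b - g (first_reach \<phi> c)) \<le> c' - c"
proof (cases "first_reach \<phi> c = b")
  case False
  have mono: "mono_on {0..1} \<phi>"
    using dom by (rule mono_on_of_dominated_increments)
  have start: "0 \<le> first_reach \<phi> c"
    using first_reach_in_unit[of c \<phi>] assms(3,4) by simp
  show ?thesis
  proof (rule norm_diff_le_from_interior)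
    show "continuous_on {first_reach \<phi> c..b} g"
      using start \<open>b \<le> 1\<close> by (auto intro: continuous_on_subset[OF cont])
    show "first_reach \<phi> c < b"
      using False \<open>first_reach \<phi> c \<le> b\<close> by simp
    fix s s' assume s: "first_reach \<phi> c < s'" "s' \<le> s" "s < b"
    have "norm (g s - g s') \<le> \<phi> s - \<phi> s'"
      using dom[of s' s] s start \<open>b \<le> 1\<close> by simp
    moreover have "c \<le> \<phi> s'"
      using first_reach_less_imp_ge[OF mono] s assms(3,4,6) by simp
    ultimately show "norm (g s - g s') \<le> c' - c"
      using below[of s] s by simp
  qed
qed (use \<open>c \<le> c'\<close> in simp)

lemma lipschitz_reparametrization_of_dominated:
  fixes g :: "real \<Rightarrow> 'a::real_normed_vector"
  assumes cont: "continuous_on {0..1} g"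
    and dom: "\<And>s t. 0 \<le> s \<Longrightarrow> s \<le> t \<Longrightarrow> t \<le> 1 \<Longrightarrow> \<phi> s + norm (g t - g s) \<le> \<phi> t"
    and "0 \<le> \<phi> 0"
  shows "\<exists>h :: real \<Rightarrow> 'a. (\<phi> 1)-lipschitz_on {0..1} h \<and> h ` {0..1} \<subseteq> g ` {0..1} \<and> h 0 = g 0 \<and> h 1 = g 1"
proof -
  have mono: "mono_on {0..1} \<phi>"
    using dom by (rule mono_on_of_dominated_increments)
  have "0 \<le> \<phi> 1"
    using mono_onD[OF mono, of 0 1] \<open>0 \<le> \<phi> 0\<close> by simp
  txt \<open>For the arc length \<open>\<phi>\<close> this is the arc-length parametrization rescaled to \<open>[0, 1]\<close>.\<close>
  define h where "h u = g (first_reach \<phi> (u * \<phi> 1))" for u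
  have lip: "dist (h u) (h u') \<le> \<phi> 1 * dist u u'" if "u \<in> {0..1}" "u' \<in> {0..1}" "u \<le> u'" for u u'
  proof -
    define c c' where "c = u * \<phi> 1" and "c' = u' * \<phi> 1"
    have "c \<le> c'"
      using that(3) \<open>0 \<le> \<phi> 1\<close> unfolding c_def c'_def by (rule mult_right_mono)
    have "c' \<le> \<phi> 1"
      using that(2) \<open>0 \<le> \<phi> 1\<close> unfolding c'_def by (simp add: mult_left_le_one_le)
    have "norm (g (first_reach \<phi> c') - g (first_reach \<phi> c)) \<le> c' - c"
    proof (rule norm_diff_from_first_reach_le[OF cont dom \<open>c \<le> c'\<close> \<open>c' \<le> \<phi> 1\<close>])
      show "first_reach \<phi> c \<le> first_reach \<phi> c'"
        using \<open>c \<le> c'\<close> \<open>c' \<le> \<phi> 1\<close> by (rule first_reach_mono)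
      show "first_reach \<phi> c' \<le> 1"
        using first_reach_in_unit[of c' \<phi>] \<open>c' \<le> \<phi> 1\<close> by simp
      fix s assume "first_reach \<phi> c < s" "s < first_reach \<phi> c'"
      moreover have "0 \<le> first_reach \<phi> c"
        using first_reach_in_unit[of c \<phi>] \<open>c \<le> c'\<close> \<open>c' \<le> \<phi> 1\<close> by simp
      ultimately show "\<phi> s \<le> c'"
        using less_first_reach_imp_less[of c' \<phi> s] \<open>c' \<le> \<phi> 1\<close> by simp
    qed
    then show ?thesis
      using \<open>u \<le> u'\<close>
      by (simp add: h_def c_def c'_def dist_norm norm_minus_commute algebra_simps)
  qed
  have "(\<phi> 1)-lipschitz_on {0..1} h"
  proof (rule lipschitz_onI[OF _ \<open>0 \<le> \<phi> 1\<close>])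
    fix u u' :: real assume "u \<in> {0..1}" "u' \<in> {0..1}"
    then show "dist (h u) (h u') \<le> \<phi> 1 * dist u u'"
      using lip[of u u'] lip[of u' u] by (cases "u \<le> u'") (auto simp: dist_commute)
  qed
  moreover have "h ` {0..1} \<subseteq> g ` {0..1}"
  proof (rule image_subsetI)
    fix u :: real assume "u \<in> {0..1}"
    then have "u * \<phi> 1 \<le> \<phi> 1"
      using \<open>0 \<le> \<phi> 1\<close> by (simp add: mult_left_le_one_le)
    then show "h u \<in> g ` {0..1}"
      unfolding h_def using first_reach_in_unit[of "u * \<phi> 1" \<phi>] by blast
  qed
  moreover have "h 0 = g 0"
    using first_reach_eq_0[OF mono] \<open>0 \<le> \<phi> 0\<close> by (simp add: h_def)
  moreover have "norm (g 1 - h 1) \<le> \<phi> 1 - \<phi> 1"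
    unfolding h_def mult_1
  proof (rule norm_diff_from_first_reach_le[OF cont dom order_refl order_refl])
    show "first_reach \<phi> (\<phi> 1) \<le> 1"
      using first_reach_in_unit[of "\<phi> 1" \<phi>] by simp
    show "(1::real) \<le> 1"
      by simp
    fix s assume "first_reach \<phi> (\<phi> 1) < s" "s < 1"
    then show "\<phi> s \<le> \<phi> 1"
      using first_reach_in_unit[of "\<phi> 1" \<phi>] mono_onD[OF mono, of s 1] by simp
  qed
  then have "h 1 = g 1"
    by simp
  ultimately show ?thesis
    by (intro exI[of _ h] conjI)
qed

definition partial_variation_sums :: "(real \<Rightarrow> 'a::real_normed_vector) \<Rightarrow> real \<Rightarrow> real set" where
  "partial_variation_sums g t = {(\<Sum>i<m. norm (g (P (Suc i)) - g (P i))) | P m.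
      P 0 = 0 \<and> P m = t \<and> (\<forall>i<m. P i \<le> P (Suc i))}"

definition arc_length :: "(real \<Rightarrow> 'a::real_normed_vector) \<Rightarrow> real \<Rightarrow> real" where
  "arc_length g t = Sup (partial_variation_sums g t)"

lemma variation_sums_eq_partial_variation_sums:
  "variation_sums g = partial_variation_sums g 1"
  by (simp add: variation_sums_def partial_variation_sums_def)

lemma zero_in_partial_variation_sums: "0 \<in> partial_variation_sums g 0"
  unfolding partial_variation_sums_def
  by (rule CollectI, rule exI[of _ "\<lambda>_. 0"], rule exI[of _ 0]) simp

lemma partial_variation_sums_extend:
  assumes "\<sigma> \<in> partial_variation_sums g t" "t \<le> t'"
  shows "\<sigma> + norm (g t' - g t) \<in> partial_variation_sums g t'"
proof -
  obtain P m where P: "\<sigma> = (\<Sum>i<m. norm (g (P (Suc i)) - g (P i)))" "P 0 = 0" "P m = t"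
    "\<forall>i<m. P i \<le> P (Suc i)"
    using assms(1) unfolding partial_variation_sums_def by blast
  define P' where "P' = P(Suc m := t')"
  have "(\<Sum>i<m. norm (g (P' (Suc i)) - g (P' i))) = \<sigma>"
    unfolding P(1) by (rule sum.cong) (auto simp: P'_def)
  then have "\<sigma> + norm (g t' - g t) = (\<Sum>i<Suc m. norm (g (P' (Suc i)) - g (P' i)))"
    using P by (simp add: P'_def)
  moreover have "P' 0 = 0" "P' (Suc m) = t'" "\<forall>i<Suc m. P' i \<le> P' (Suc i)"
    using P assms(2) by (auto simp: P'_def less_Suc_eq)
  ultimately show ?thesis
    unfolding partial_variation_sums_def by blast
qed

lemma bdd_above_partial_variation_sums:
  assumes "bdd_above (variation_sums g)" "t \<le> 1"
  shows "bdd_above (partial_variation_sums g t)"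
proof (rule bdd_aboveI)
  fix \<sigma> assume "\<sigma> \<in> partial_variation_sums g t"
  then have "\<sigma> + norm (g 1 - g t) \<in> variation_sums g"
    using assms(2) by (simp add: variation_sums_eq_partial_variation_sums partial_variation_sums_extend)
  then have "\<sigma> + norm (g 1 - g t) \<le> Sup (variation_sums g)"
    using assms(1) by (rule cSup_upper)
  then show "\<sigma> \<le> Sup (variation_sums g)"
    using norm_ge_zero[of "g 1 - g t"] by linarith
qed

lemma arc_length_add_norm_le:
  assumes "bdd_above (variation_sums g)" "0 \<le> s" "s \<le> t" "t \<le> 1"
  shows "arc_length g s + norm (g t - g s) \<le> arc_length g t"
proof -
  have "partial_variation_sums g s \<noteq> {}"
    using partial_variation_sums_extend[OF zero_in_partial_variation_sums \<open>0 \<le> s\<close>] by blast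
  moreover have "\<sigma> \<le> arc_length g t - norm (g t - g s)" if "\<sigma> \<in> partial_variation_sums g s" for \<sigma>
  proof -
    have "\<sigma> + norm (g t - g s) \<le> arc_length g t"
      unfolding arc_length_def using that assms
      by (intro cSup_upper partial_variation_sums_extend bdd_above_partial_variation_sums)
    then show ?thesis
      by simp
  qed
  ultimately have "arc_length g s \<le> arc_length g t - norm (g t - g s)"
    unfolding arc_length_def[of g s] by (rule cSup_least)
  then show ?thesis
    by simp
qed

lemma rectifiable_path_lipschitz_reparametrization:
  fixes g :: "real \<Rightarrow> 'a::real_normed_vector"
  assumes "rectifiable_path g"
  obtains L and h :: "real \<Rightarrow> 'a" where "L-lipschitz_on {0..1} h" "h ` {0..1} \<subseteq> path_image g"
    "h 0 = pathstart g" "h 1 = pathfinish g"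
proof -
  have bdd: "bdd_above (variation_sums g)" and cont: "continuous_on {0..1} g"
    using assms by (auto simp: rectifiable_path_def path_def)
  have "0 \<le> arc_length g 0"
    unfolding arc_length_def
    by (rule cSup_upper[OF zero_in_partial_variation_sums bdd_above_partial_variation_sums[OF bdd]]) simp
  then obtain h :: "real \<Rightarrow> 'a" where "(arc_length g 1)-lipschitz_on {0..1} h" "h ` {0..1} \<subseteq> g ` {0..1}"
    "h 0 = g 0" "h 1 = g 1"
    using lipschitz_reparametrization_of_dominated[OF cont arc_length_add_norm_le[OF bdd]] by blast
  then show ?thesis
    by (intro that[of "arc_length g 1" h]) (auto simp: path_image_def pathstart_def pathfinish_def)
qed

theorem mainTheorem3:
  fixes E :: "'n::euclidean_space set" and k :: real
    and A :: "'n \<Rightarrow> real" and f :: "'n \<Rightarrow> real"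
  assumes "closed E"
    and "k \<ge> 1"
    and "\<forall>x\<in>E. \<forall>y\<in>E. \<exists>g. rectifiable_path g \<and> path_image g \<subseteq> E \<and>
           pathstart g = x \<and> pathfinish g = y \<and> path_length g \<le> k * dist x y"
    and "linear A"
    and "locally_lipschitz_on E f"
    and "\<forall>(I::real set) p. is_interval I \<and> p ` I \<subseteq> E \<and> locally_lipschitz_on I p \<longrightarrow>
           (AE t in lborel. t \<in> I \<longrightarrow>
              (\<exists>v. (p has_vector_derivative v) (at t within I) \<and>
                   ((\<lambda>s. f (p s)) has_real_derivative A v) (at t within I)))"
  shows "\<exists>l b. linear l \<and> (\<forall>x\<in>E. f x = l x + b)"
proof -
  have "bounded_linear A"
    using assms(4) by (simp add: linear_conv_bounded_linear)
  have const: "f y - A y = f x - A x" if xy: "x \<in> E" "y \<in> E" for x y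
  proof -
    obtain g where "rectifiable_path g \<and> path_image g \<subseteq> E \<and> pathstart g = x \<and> pathfinish g = y
        \<and> path_length g \<le> k * dist x y"
      using bspec[OF bspec[OF assms(3) xy(1)] xy(2)] by (rule exE)
    then have g: "rectifiable_path g" "path_image g \<subseteq> E" "pathstart g = x" "pathfinish g = y"
      by simp_all
    obtain L and h :: "real \<Rightarrow> 'n" where h: "L-lipschitz_on {0..1} h" "h ` {0..1} \<subseteq> path_image g"
      "h 0 = pathstart g" "h 1 = pathfinish g"
      by (rule rectifiable_path_lipschitz_reparametrization[OF g(1)])
    have hE: "h ` {0..1} \<subseteq> E"
      using h(2) g(2) by (rule order_trans)
    have "AE t in lborel. t \<in> {0..1} \<longrightarrow>
        (\<exists>v. (h has_vector_derivative v) (at t within {0..1}) \<and>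
             ((\<lambda>s. f (h s)) has_real_derivative A v) (at t within {0..1}))"
      using is_interval_cc hE lipschitz_on_imp_locally_lipschitz_on[OF h(1)]
      by (intro assms(6)[rule_format] conjI)
    then show ?thesis
      using diff_linear_constant_along_lipschitz_path[OF \<open>bounded_linear A\<close> assms(5) h(1) hE] h(3,4) g(3,4)
      by simp
  qed
  define x0 where "x0 = (SOME x. x \<in> E)"
  show ?thesis
  proof (intro exI[of _ A] exI[of _ "f x0 - A x0"] conjI ballI assms(4))
    fix x assume "x \<in> E"
    then have "x0 \<in> E"
      unfolding x0_def by (rule someI)
    then show "f x = A x + (f x0 - A x0)"
      using const[OF _ \<open>x \<in> E\<close>] by fastforce
  qed
qed

end
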